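(* Assume (A1) and let $i,j\in I_N$. Each of the functions $\mathcal{D}_{\mathrm{junction}}^{ji}$, $\mathcal{D}_{\mathrm{linear}}^{ji}$, $\mathcal{D}_{\mathrm{implicit}}^{ji}$ is convex and $C^1$ on $J_j^*\times J_i^*$ (as a function of $(y_j,x_i)\in(0,\infty)^2$), and if $\tilde{\mathcal{D}}$ denotes any one of them, then for all $(y,x)\in J_j^*\times J_i^*$, $$\tilde{\mathcal{D}}-x_i\partial_{x_i}\tilde{\mathcal{D}}-y_j\partial_{y_j}\tilde{\mathcal{D}}+H_i(\partial_{x_i}\tilde{\mathcal{D}})=0,\qquad \tilde{\mathcal{D}}-x_i\partial_{x_i}\tilde{\mathcal{D}}-y_j\partial_{y_j}\tilde{\mathcal{D}}+H_j(-\partial_{y_j}\tilde{\mathcal{D}})=0,$$ all quantities evaluated at $(y,x)$.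
   Context: Junction: fix an integer $N\ge1$ and $N$ distinct unit vectors $e_1,\dots,e_N\in\mathbb{R}^2$. Set $J_i=[0,\infty)e_i$, $J_i^*=J_i\setminus\{0\}$, $J=\bigcup_iJ_i$, $I_N=\{1,\dots,N\}$. Each $x\in J_i$ is written $x=x_ie_i$, $x_i\ge0$. For a function $f$ on $J\times J$ (variables $(y,x)$), $f^{ji}$ denotes its restriction to $J_j\times J_i$, viewed as a function of $(y_j,x_i)$. (A1): there is $\gamma>0$ with $L_i\in C^2(\mathbb{R})$, $L_i''\ge\gamma$ for each $i$; $H_i(p)=\sup_{q\in\mathbb{R}}(pq-L_i(q))$. $L_0(0)=\min_jL_j(0)$, $I_0=\{l:L_l(0)=L_0(0)\}$. $K_l(\xi)=L_l(\xi)-\xi L_l'(\xi)-L_0(0)$; $\xi_l^-\le0$ (resp. $\xi_l^+\ge0$) is the unique zero of $K_l$ on $(-\infty,0]$ (resp. $[0,\infty)$). For $\tau\in[0,1]$: $\mathcal{E}_1(\tau,y)=\tau L_j(-y_j/\tau)-\tau L_0(0)$ if $y=y_je_j\ne0$, $\tau\ne0$; $\mathcal{E}_1(\tau,0)=0$; $\mathcal{E}_1(0,y)=+\infty$ if $y\ne0$. $\mathcal{E}_2(\tau,x)=(1-\tau)L_i(x_i/(1-\tau))+\tau L_0(0)$ if $x=x_ie_i\ne0$, $\tau\ne1$; $\mathcal{E}_2(\tau,0)=L_0(0)$; $\mathcal{E}_2(1,x)=+\infty$ if $x\ne0$. $\mathcal{D}_{\mathrm{junction}}(y,x)=\inf_{0\le\tau_1\le\tau_2\le1}\{\mathcal{E}_1(\tau_1,y)+\mathcal{E}_2(\tau_2,x)\}$;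 $\mathcal{D}_{\mathrm{implicit}}(y,x)=\inf_{0\le\tau\le1}\{\mathcal{E}_1(\tau,y)+\mathcal{E}_2(\tau,x)\}$; for $(y,x)\in J_j\times J_i$, $\mathcal{D}_{\mathrm{linear}}^{ji}(y,x)=-L_j'(\xi_j^-)y_j+L_i'(\xi_i^+)x_i+L_0(0)$. *)

theory Defs
  imports "HOL-Analysis.Analysis"
begin

text \<open>Branches are indexed by 1..N; L l is the Lagrangian on branch l.
  A point of J_j is identified with its coordinate y_j >= 0 (the restriction
  f^{ji} of a function on J x J is a function of (y_j, x_i)).\<close>

definition L00 :: "nat \<Rightarrow> (nat \<Rightarrow> real \<Rightarrow> real) \<Rightarrow> real" where
  "L00 N L = Min ((\<lambda>j. L j 0) ` {1..N})"

definition Ham :: "(nat \<Rightarrow> real \<Rightarrow> real) \<Rightarrow> nat \<Rightarrow> real \<Rightarrow> real" where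
  "Ham L l p = (SUP q. p * q - L l q)"

definition Kfun :: "nat \<Rightarrow> (nat \<Rightarrow> real \<Rightarrow> real) \<Rightarrow> nat \<Rightarrow> real \<Rightarrow> real" where
  "Kfun N L l \<xi> = L l \<xi> - \<xi> * deriv (L l) \<xi> - L00 N L"

definition xi_minus :: "nat \<Rightarrow> (nat \<Rightarrow> real \<Rightarrow> real) \<Rightarrow> nat \<Rightarrow> real" where
  "xi_minus N L l = (THE \<xi>. \<xi> \<le> 0 \<and> Kfun N L l \<xi> = 0)"

definition xi_plus :: "nat \<Rightarrow> (nat \<Rightarrow> real \<Rightarrow> real) \<Rightarrow> nat \<Rightarrow> real" where
  "xi_plus N L l = (THE \<xi>. \<xi> \<ge> 0 \<and> Kfun N L l \<xi> = 0)"

text \<open>E_1(tau, y) for y = s e_j (s = y_j >= 0).\<close>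
definition E1 :: "nat \<Rightarrow> (nat \<Rightarrow> real \<Rightarrow> real) \<Rightarrow> nat \<Rightarrow> real \<Rightarrow> real \<Rightarrow> ereal" where
  "E1 N L j \<tau> s =
     (if s = 0 then 0
      else if \<tau> = 0 then \<infinity>
      else ereal (\<tau> * L j (- s / \<tau>) - \<tau> * L00 N L))"

text \<open>E_2(tau, x) for x = s e_i (s = x_i >= 0).\<close>
definition E2 :: "nat \<Rightarrow> (nat \<Rightarrow> real \<Rightarrow> real) \<Rightarrow> nat \<Rightarrow> real \<Rightarrow> real \<Rightarrow> ereal" where
  "E2 N L i \<tau> s =
     (if s = 0 then ereal (L00 N L)
      else if \<tau> = 1 then \<infinity>
      else ereal ((1 - \<tau>) * L i (s / (1 - \<tau>)) + \<tau> * L00 N L))"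

definition D_junction :: "nat \<Rightarrow> (nat \<Rightarrow> real \<Rightarrow> real) \<Rightarrow> nat \<Rightarrow> nat \<Rightarrow> real \<times> real \<Rightarrow> ereal" where
  "D_junction N L j i z =
     (INF t \<in> {(t1, t2). 0 \<le> t1 \<and> t1 \<le> t2 \<and> t2 \<le> 1}.
        E1 N L j (fst t) (fst z) + E2 N L i (snd t) (snd z))"

definition D_implicit :: "nat \<Rightarrow> (nat \<Rightarrow> real \<Rightarrow> real) \<Rightarrow> nat \<Rightarrow> nat \<Rightarrow> real \<times> real \<Rightarrow> ereal" where
  "D_implicit N L j i z =
     (INF \<tau> \<in> {0..1}. E1 N L j \<tau> (fst z) + E2 N L i \<tau> (snd z))"

definition D_linear :: "nat \<Rightarrow> (nat \<Rightarrow> real \<Rightarrow> real) \<Rightarrow> nat \<Rightarrow> nat \<Rightarrow> real \<times> real \<Rightarrow> real" where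
  "D_linear N L j i z =
     - deriv (L j) (xi_minus N L j) * fst z + deriv (L i) (xi_plus N L i) * snd z + L00 N L"

definition Quad :: "(real \<times> real) set" where
  "Quad = {0<..} \<times> {0<..}"

definition C1_HJ :: "(real \<Rightarrow> real) \<Rightarrow> (real \<Rightarrow> real) \<Rightarrow> (real \<times> real \<Rightarrow> real) \<Rightarrow> bool" where
  "C1_HJ Hj Hi f \<longleftrightarrow>
     convex_on Quad f \<and>
     (\<exists>Dy Dx. continuous_on Quad Dy \<and> continuous_on Quad Dx \<and>
        (\<forall>z\<in>Quad.
           (f has_derivative (\<lambda>(h, k). Dy z * h + Dx z * k)) (at z) \<and>
           f z - snd z * Dx z - fst z * Dy z + Hi (Dx z) = 0 \<and>
           f z - snd z * Dx z - fst z * Dy z + Hj (- Dy z) = 0))"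

end

theory Submission
  imports Defs
begin

(* Each of the three cost functions is, on the open quadrant z = (y_j, x_i) > 0, the upper
   envelope of the "supporting planes"
       plane a b z = K_j(a) - L_j'(a) y_j + L_i'(b) x_i,
   where K_l(xi) = L_l(xi) - xi L_l'(xi) is the intercept of the tangent to L_l at xi and the
   slopes a <= 0 <= b are "balanced", K_j(a) = K_i(b) (for the junction cost additionally
   K_j(a) <= L_0(0)).  The proof has four parts.
   (1) Convex analysis: a function with a continuous subgradient field on an open convex set is
       convex and differentiable, with the subgradient as gradient.
   (2) A uniformly convex C^2 function g has a tangent intercept K that increases strictly on
       (-oo,0], decreases strictly on [0,oo) and tends to -oo; hence each level K = c <= g(0) is
       attained exactly once on each half-line, and H(g'(a)) = -K(a).
   (3) Perspective convexity (t g(w/t) >= t K(a) + g'(a) w) bounds every admissible cost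
       E_1 + E_2 from below by the supporting plane of any admissible pair (a,b); the bound is
       attained by an optimal schedule, whose slopes depend continuously on z (the optimal
       crossing time is the root of a strictly increasing balance function).
   (4) Hence f = plane (A z) (B z) z with continuous A, B and every plane (A u) (B u) lies
       below f, so (1) applies; the Hamilton-Jacobi identities are then H(L'(a)) = -K(a). *)

(* A continuous field of subgradients is the derivative: the linearization error at z is
   squeezed between 0 and (g w - g z) . (w - z), which is o(|w - z|). *)
lemma has_derivative_continuous_subgradient:
  fixes f :: "'a::real_inner \<Rightarrow> real"
  assumes S: "open S" "z \<in> S" and cont: "continuous_on S g"
    and sub: "\<And>u v. u \<in> S \<Longrightarrow> v \<in> S \<Longrightarrow> f u + g u \<bullet> (v - u) \<le> f v"
  shows "(f has_derivative (\<lambda>h. g z \<bullet> h)) (at z)"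
proof -
  have err: "\<bar>f w - f z - g z \<bullet> (w - z)\<bar> \<le> norm (g w - g z) * norm (w - z)" if "w \<in> S" for w
  proof -
    have "0 \<le> f w - f z - g z \<bullet> (w - z)" using sub[OF S(2) that] by simp
    moreover have "f w - f z - g z \<bullet> (w - z) \<le> (g w - g z) \<bullet> (w - z)"
      using sub[OF that S(2)] by (simp add: inner_diff_left inner_diff_right)
    moreover have "(g w - g z) \<bullet> (w - z) \<le> norm (g w - g z) * norm (w - z)"
      by (rule norm_cauchy_schwarz)
    ultimately show ?thesis by linarith
  qed
  have "isCont g z" using cont S continuous_on_eq_continuous_at by blast
  then have lim: "((\<lambda>w. norm (g w - g z)) \<longlongrightarrow> 0) (at z)"
    unfolding isCont_def by (intro tendsto_norm_zero LIM_zero)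
  have bound: "eventually (\<lambda>w. norm (norm (f w - f z - g z \<bullet> (w - z)) / norm (w - z))
      \<le> norm (g w - g z)) (at z)"
    using eventually_at_in_open[OF S] by (rule eventually_mono) (auto simp: divide_le_eq err)
  show ?thesis
    unfolding has_derivative_iff_norm
    using bounded_linear_inner_right Lim_null_comparison[OF bound lim] by simp
qed

lemma convex_on_subgradient:
  fixes f :: "'a::real_inner \<Rightarrow> real"
  assumes S: "convex S"
    and sub: "\<And>u v. u \<in> S \<Longrightarrow> v \<in> S \<Longrightarrow> f u + g u \<bullet> (v - u) \<le> f v"
  shows "convex_on S f"
proof (rule convex_onI)
  fix t :: real and x y assume t: "0 < t" "t < 1" and xy: "x \<in> S" "y \<in> S"
  define w where "w = (1 - t) *\<^sub>R x + t *\<^sub>R y"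
  have w: "w \<in> S" using S xy t convexD[of S x y "1 - t" t] unfolding w_def by auto
  have "(1 - t) * (g w \<bullet> (x - w)) + t * (g w \<bullet> (y - w)) = g w \<bullet> ((1 - t) *\<^sub>R x + t *\<^sub>R y - w)"
    by (simp add: inner_diff_right inner_add_right algebra_simps)
  then have balance: "(1 - t) * (g w \<bullet> (x - w)) + t * (g w \<bullet> (y - w)) = 0"
    by (simp add: w_def)
  have "(1 - t) * (f w + g w \<bullet> (x - w)) + t * (f w + g w \<bullet> (y - w)) \<le> (1 - t) * f x + t * f y"
    using sub[OF w xy(1)] sub[OF w xy(2)] t by (intro add_mono mult_left_mono) auto
  then show "f ((1 - t) *\<^sub>R x + t *\<^sub>R y) \<le> (1 - t) * f x + t * f y"
    using balance by (simp add: w_def algebra_simps)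
qed (rule S)

(* The value at 0 of the tangent line to g at xi; minus the Legendre transform at g'(xi). *)
definition tangent_intercept :: "(real \<Rightarrow> real) \<Rightarrow> real \<Rightarrow> real" where
  "tangent_intercept g \<xi> = g \<xi> - \<xi> * deriv g \<xi>"

locale uniformly_convex =
  fixes g :: "real \<Rightarrow> real" and \<gamma> :: real
  assumes gamma_pos: "\<gamma> > 0"
    and differentiable: "\<And>x. g differentiable at x"
    and deriv_differentiable: "\<And>x. deriv g differentiable at x"
    and second_deriv_ge: "\<And>x. deriv (deriv g) x \<ge> \<gamma>"
begin

abbreviation K :: "real \<Rightarrow> real" where "K \<equiv> tangent_intercept g"

lemma has_deriv: "(g has_real_derivative deriv g x) (at x)"
  using differentiable DERIV_deriv_iff_real_differentiable by blast

lemma has_second_deriv: "(deriv g has_real_derivative deriv (deriv g) x) (at x)"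
  using deriv_differentiable DERIV_deriv_iff_real_differentiable by blast

lemma deriv_gap:
  assumes "a \<le> b" shows "\<gamma> * (b - a) \<le> deriv g b - deriv g a"
proof (cases "a = b")
  case False
  with assms have "a < b" by simp
  from MVT2[OF this, of "deriv g" "deriv (deriv g)"] has_second_deriv obtain z
    where "deriv g b - deriv g a = (b - a) * deriv (deriv g) z" by blast
  moreover have "(b - a) * \<gamma> \<le> (b - a) * deriv (deriv g) z"
    using second_deriv_ge assms by (intro mult_left_mono) auto
  ultimately show ?thesis by (simp add: mult.commute)
qed simp

lemma deriv_mono: "a \<le> b \<Longrightarrow> deriv g a \<le> deriv g b"
  using deriv_gap[of a b] gamma_pos by (smt (verit) mult_nonneg_nonneg)

lemma tangent_below: "g a + deriv g a * (q - a) \<le> g q"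
proof (cases q a rule: linorder_cases)
  case less
  from MVT2[OF less, of g "deriv g"] has_deriv obtain z
    where z: "q < z" "z < a" "g a - g q = (a - q) * deriv g z" by blast
  have "(a - q) * deriv g z \<le> (a - q) * deriv g a"
    using z less deriv_mono by (intro mult_left_mono) auto
  with z show ?thesis by (simp add: algebra_simps)
next
  case greater
  from MVT2[OF greater, of g "deriv g"] has_deriv obtain z
    where z: "a < z" "z < q" "g q - g a = (q - a) * deriv g z" by blast
  have "(q - a) * deriv g a \<le> (q - a) * deriv g z"
    using z greater deriv_mono by (intro mult_left_mono) auto
  with z show ?thesis by (simp add: algebra_simps)
qed simp

lemma perspective_below:
  assumes "t > 0" shows "t * K a + deriv g a * w \<le> t * g (w / t)"
proof -
  have "t * (g a + deriv g a * (w / t - a)) \<le> t * g (w / t)"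
    using tangent_below[of a "w / t"] assms by (intro mult_left_mono) auto
  moreover have "t * (g a + deriv g a * (w / t - a)) = t * K a + deriv g a * w"
    using assms by (simp add: tangent_intercept_def algebra_simps)
  ultimately show ?thesis by simp
qed

(* The Legendre transform at a slope g'(a) is attained at a, with value -K(a). *)
lemma Ham_deriv: "Ham (\<lambda>_. g) l (deriv g a) = - K a"
proof -
  have "(SUP q. deriv g a * q - g q) = deriv g a * a - g a"
  proof (rule cSup_eq_maximum)
    fix y assume "y \<in> range (\<lambda>q. deriv g a * q - g q)"
    then show "y \<le> deriv g a * a - g a" using tangent_below[of a] by (auto simp: algebra_simps)
  qed blast
  then show ?thesis unfolding Ham_def tangent_intercept_def by (simp add: algebra_simps)
qed

lemma intercept_continuous: "continuous_on A K"
proof -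
  have "isCont (\<lambda>\<xi>. g \<xi> - \<xi> * deriv g \<xi>) x" for x
    using DERIV_isCont[OF has_deriv] DERIV_isCont[OF has_second_deriv]
    by (intro continuous_intros) auto
  then show ?thesis
    unfolding tangent_intercept_def[abs_def] by (simp add: continuous_at_imp_continuous_on)
qed

lemma intercept_gain_neg:
  assumes "a \<le> b" "b \<le> 0" shows "\<gamma> * (b - a) * (- b) \<le> K b - K a"
proof -
  have "(- b) * (\<gamma> * (b - a)) \<le> (- b) * (deriv g b - deriv g a)"
    using deriv_gap[OF assms(1)] assms by (intro mult_left_mono) auto
  then show ?thesis using tangent_below[of a b] unfolding tangent_intercept_def
    by (simp add: algebra_simps)
qed

lemma intercept_gain_pos:
  assumes "0 \<le> a" "a \<le> b" shows "\<gamma> * (b - a) * a \<le> K a - K b"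
proof -
  have "a * (\<gamma> * (b - a)) \<le> a * (deriv g b - deriv g a)"
    using deriv_gap[OF assms(2)] assms by (intro mult_left_mono) auto
  then show ?thesis using tangent_below[of b a] unfolding tangent_intercept_def
    by (simp add: algebra_simps)
qed

lemma intercept_mono_neg: "a \<le> b \<Longrightarrow> b \<le> 0 \<Longrightarrow> K a \<le> K b"
  using intercept_gain_neg[of a b] gamma_pos by (smt (verit) mult_nonneg_nonneg)

lemma intercept_antimono_pos: "0 \<le> a \<Longrightarrow> a \<le> b \<Longrightarrow> K b \<le> K a"
  using intercept_gain_pos[of a b] gamma_pos by (smt (verit) mult_nonneg_nonneg)

(* Strictness follows by splitting [a,b] at its midpoint, where the gain is positive. *)
lemma intercept_strict_mono_neg:
  assumes "a < b" "b \<le> 0" shows "K a < K b"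
proof -
  let ?m = "(a + b) / 2"
  have "0 < \<gamma> * (?m - a) * (- ?m)" using assms gamma_pos by (intro mult_pos_pos) auto
  also have "\<dots> \<le> K ?m - K a" using intercept_gain_neg[of a ?m] assms by simp
  finally show ?thesis using intercept_mono_neg[of ?m b] assms by simp
qed

lemma intercept_strict_antimono_pos:
  assumes "0 \<le> a" "a < b" shows "K b < K a"
proof -
  let ?m = "(a + b) / 2"
  have "0 < \<gamma> * (b - ?m) * ?m" using assms gamma_pos by (intro mult_pos_pos) auto
  also have "\<dots> \<le> K ?m - K b" using intercept_gain_pos[of ?m b] assms by simp
  finally show ?thesis using intercept_antimono_pos[of a ?m] assms by simp
qed

lemma intercept_decay:
  assumes "1 \<le> \<bar>\<xi>\<bar>" shows "K \<xi> \<le> g 0 - \<gamma> * \<bar>\<xi>\<bar> / 4"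
proof -
  have "K 0 = g 0" by (simp add: tangent_intercept_def)
  have "\<bar>\<xi>\<bar> * 1 \<le> \<bar>\<xi>\<bar> * \<bar>\<xi>\<bar>" using assms by (intro mult_left_mono) auto
  then have sq: "\<gamma> / 4 * \<bar>\<xi>\<bar> \<le> \<gamma> / 4 * (\<xi> * \<xi>)"
    using gamma_pos by (intro mult_left_mono) (auto simp: abs_mult_self_eq)
  show ?thesis
  proof (cases "\<xi> < 0")
    case True
    have "\<gamma> * (\<xi> / 2 - \<xi>) * (- (\<xi> / 2)) \<le> K (\<xi> / 2) - K \<xi>"
      using intercept_gain_neg[of \<xi> "\<xi> / 2"] True by simp
    moreover have "K (\<xi> / 2) \<le> K 0" using intercept_mono_neg[of "\<xi> / 2" 0] True by simp
    ultimately show ?thesis using sq \<open>K 0 = g 0\<close> by (simp add: algebra_simps)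
  next
    case False
    have "\<gamma> * (\<xi> - \<xi> / 2) * (\<xi> / 2) \<le> K (\<xi> / 2) - K \<xi>"
      using intercept_gain_pos[of "\<xi> / 2" \<xi>] False by simp
    moreover have "K (\<xi> / 2) \<le> K 0" using intercept_antimono_pos[of 0 "\<xi> / 2"] False by simp
    ultimately show ?thesis using sq \<open>K 0 = g 0\<close> by (simp add: algebra_simps)
  qed
qed

lemma intercept_eventually_below: "\<exists>R>0. \<forall>\<xi>. R \<le> \<bar>\<xi>\<bar> \<longrightarrow> K \<xi> < c"
proof (intro exI[of _ "max 1 (4 * (g 0 - c) / \<gamma> + 1)"] conjI allI impI)
  fix \<xi> assume R: "max 1 (4 * (g 0 - c) / \<gamma> + 1) \<le> \<bar>\<xi>\<bar>"
  then have "4 * (g 0 - c) / \<gamma> < \<bar>\<xi>\<bar>" by linarith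
  then have "4 * (g 0 - c) < \<gamma> * \<bar>\<xi>\<bar>" using gamma_pos by (simp add: divide_less_eq mult.commute)
  moreover have "K \<xi> \<le> g 0 - \<gamma> * \<bar>\<xi>\<bar> / 4" using R by (intro intercept_decay) simp
  ultimately show "K \<xi> < c" by argo
qed simp

(* Each level c <= g(0) of K is attained exactly once on each half-line (this defines
   xi^- and xi^+). *)
lemma intercept_root_neg:
  assumes "c \<le> g 0" shows "\<exists>!\<xi>. \<xi> \<le> 0 \<and> K \<xi> = c"
proof -
  obtain R where R: "R > 0" "\<forall>\<xi>. R \<le> \<bar>\<xi>\<bar> \<longrightarrow> K \<xi> < c"
    using intercept_eventually_below by blast
  then have "K (- R) \<le> c" by (simp add: less_imp_le)
  moreover have "c \<le> K 0" using assms by (simp add: tangent_intercept_def)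
  ultimately obtain \<xi> where "\<xi> \<le> 0" "K \<xi> = c"
    using IVT'[of K "- R" c 0] intercept_continuous R(1) by auto
  moreover have "\<xi>' = \<xi>" if "\<xi>' \<le> 0" "K \<xi>' = c" for \<xi>'
    using intercept_strict_mono_neg[of \<xi>' \<xi>] intercept_strict_mono_neg[of \<xi> \<xi>'] that
      \<open>\<xi> \<le> 0\<close> \<open>K \<xi> = c\<close> by (cases \<xi>' \<xi> rule: linorder_cases) auto
  ultimately show ?thesis by blast
qed

lemma intercept_root_pos:
  assumes "c \<le> g 0" shows "\<exists>!\<xi>. 0 \<le> \<xi> \<and> K \<xi> = c"
proof -
  obtain R where R: "R > 0" "\<forall>\<xi>. R \<le> \<bar>\<xi>\<bar> \<longrightarrow> K \<xi> < c"
    using intercept_eventually_below by blast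
  then have "K R \<le> c" by (simp add: less_imp_le)
  moreover have "c \<le> K 0" using assms by (simp add: tangent_intercept_def)
  ultimately obtain \<xi> where "0 \<le> \<xi>" "K \<xi> = c"
    using IVT2'[of K R c 0] intercept_continuous R(1) by auto
  moreover have "\<xi>' = \<xi>" if "0 \<le> \<xi>'" "K \<xi>' = c" for \<xi>'
    using intercept_strict_antimono_pos[of \<xi>' \<xi>] intercept_strict_antimono_pos[of \<xi> \<xi>'] that
      \<open>0 \<le> \<xi>\<close> \<open>K \<xi> = c\<close> by (cases \<xi>' \<xi> rule: linorder_cases) auto
  ultimately show ?thesis by blast
qed

end

lemma continuous_on_root_of_increasing:
  fixes G :: "'a::t2_space \<Rightarrow> real \<Rightarrow> real" and t :: "'a \<Rightarrow> real"
  assumes S: "open S"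
    and range: "\<And>z. z \<in> S \<Longrightarrow> a < t z \<and> t z < b"
    and root: "\<And>z. z \<in> S \<Longrightarrow> G z (t z) = 0"
    and mono: "\<And>z \<sigma> \<tau>. z \<in> S \<Longrightarrow> a < \<sigma> \<Longrightarrow> \<sigma> < \<tau> \<Longrightarrow> \<tau> < b \<Longrightarrow> G z \<sigma> < G z \<tau>"
    and cont: "\<And>\<tau>. a < \<tau> \<Longrightarrow> \<tau> < b \<Longrightarrow> continuous_on S (\<lambda>z. G z \<tau>)"
  shows "continuous_on S t"
proof (rule continuous_at_imp_continuous_on, rule ballI)
  fix z0 assume z0: "z0 \<in> S"
  define t0 where "t0 = t z0"
  have t0: "a < t0" "t0 < b" "G z0 t0 = 0" using range[OF z0] root[OF z0] by (auto simp: t0_def)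
  have "\<forall>\<^sub>F z in at z0. dist (t z) t0 < e" if e: "e > 0" for e
  proof -
    define \<epsilon> where "\<epsilon> = min (e / 2) (min ((t0 - a) / 2) ((b - t0) / 2))"
    have "0 < \<epsilon>" using e t0 by (simp add: \<epsilon>_def)
    moreover have "\<epsilon> \<le> e / 2" "\<epsilon> \<le> (t0 - a) / 2" "\<epsilon> \<le> (b - t0) / 2"
      unfolding \<epsilon>_def by linarith+
    ultimately have \<epsilon>: "0 < \<epsilon>" "\<epsilon> < e" "a < t0 - \<epsilon>" "t0 + \<epsilon> < b"
      using e t0 by auto
    \<comment> \<open>the sign change of \<open>G z0\<close> around its root persists for \<open>z\<close> near \<open>z0\<close>\<close>
    have "\<forall>\<^sub>F z in at z0. G z (t0 - \<epsilon>) < 0"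
      using cont[of "t0 - \<epsilon>"] mono[OF z0, of "t0 - \<epsilon>" t0] \<epsilon> t0 S z0
      by (auto simp: continuous_on_eq_continuous_at isCont_def dest!: order_tendstoD(2))
    moreover have "\<forall>\<^sub>F z in at z0. 0 < G z (t0 + \<epsilon>)"
      using cont[of "t0 + \<epsilon>"] mono[OF z0, of t0 "t0 + \<epsilon>"] \<epsilon> t0 S z0
      by (auto simp: continuous_on_eq_continuous_at isCont_def dest!: order_tendstoD(1))
    moreover have "\<forall>\<^sub>F z in at z0. z \<in> S" using eventually_at_in_open'[OF S z0] .
    ultimately show ?thesis
    proof eventually_elim
      case (elim z)
      have "t0 - \<epsilon> < t z"
        using mono[OF elim(3), of "t z" "t0 - \<epsilon>"] elim range[OF elim(3)] root[OF elim(3)] \<epsilon>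
        by (cases "t z = t0 - \<epsilon>") force+
      moreover have "t z < t0 + \<epsilon>"
        using mono[OF elim(3), of "t0 + \<epsilon>" "t z"] elim range[OF elim(3)] root[OF elim(3)] \<epsilon>
        by (cases "t z = t0 + \<epsilon>") force+
      ultimately show ?case using \<epsilon> by (simp add: dist_real_def)
    qed
  qed
  then show "isCont t z0" unfolding isCont_def t0_def by (rule tendstoI)
qed

lemma open_Quad: "open Quad"
  unfolding Quad_def by (intro open_Times open_greaterThan)

lemma convex_Quad: "convex Quad"
  unfolding Quad_def by (intro convex_Times convex_real_interval)

lemma Quad_iff: "z \<in> Quad \<longleftrightarrow> 0 < fst z \<and> 0 < snd z"
  unfolding Quad_def by (cases z) auto

locale junction_pair =
  J: uniformly_convex gj \<gamma> + I: uniformly_convex gi \<gamma> for gj gi :: "real \<Rightarrow> real" and \<gamma> :: real +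
  fixes c :: real
  assumes c_le_j: "c \<le> gj 0" and c_le_i: "c \<le> gi 0"
begin

(* Crossing the junction at time tau with velocities -y/tau and x/(1-tau) is optimal for the
   implicit cost exactly when the two tangent intercepts agree, i.e. balance z tau = 0. *)
definition balance :: "real \<times> real \<Rightarrow> real \<Rightarrow> real" where
  "balance z \<tau> = J.K (- fst z / \<tau>) - I.K (snd z / (1 - \<tau>))"

lemma balance_strict_mono:
  assumes z: "z \<in> Quad" and \<tau>: "0 < \<sigma>" "\<sigma> < \<tau>" "\<tau> < 1"
  shows "balance z \<sigma> < balance z \<tau>"
proof -
  have y: "0 < fst z" and x: "0 < snd z" using z by (auto simp: Quad_iff)
  have "fst z / \<tau> < fst z / \<sigma>" using y \<tau> by (intro divide_strict_left_mono) auto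
  then have "J.K (- fst z / \<sigma>) < J.K (- fst z / \<tau>)"
    using y \<tau> by (intro J.intercept_strict_mono_neg) auto
  moreover have "snd z / (1 - \<sigma>) < snd z / (1 - \<tau>)" using x \<tau> by (intro divide_strict_left_mono) auto
  then have "I.K (snd z / (1 - \<tau>)) < I.K (snd z / (1 - \<sigma>))"
    using x \<tau> by (intro I.intercept_strict_antimono_pos) auto
  ultimately show ?thesis unfolding balance_def by simp
qed

lemma balance_continuous_in_point:
  assumes "0 < \<tau>" "\<tau> < 1" shows "continuous_on Quad (\<lambda>z. balance z \<tau>)"
proof -
  have "continuous_on Quad (\<lambda>z. J.K (- fst z / \<tau>))" "continuous_on Quad (\<lambda>z. I.K (snd z / (1 - \<tau>)))"
    using assms by (auto intro!: continuous_on_compose2[OF J.intercept_continuous]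
        continuous_on_compose2[OF I.intercept_continuous] continuous_intros)
  then show ?thesis unfolding balance_def by (intro continuous_intros)
qed

lemma balance_continuous_in_time:
  assumes "0 < a" "b < 1" shows "continuous_on {a..b} (balance z)"
proof -
  have "continuous_on {a..b} (\<lambda>\<tau>. J.K (- fst z / \<tau>))" "continuous_on {a..b} (\<lambda>\<tau>. I.K (snd z / (1 - \<tau>)))"
    using assms by (auto intro!: continuous_on_compose2[OF J.intercept_continuous]
        continuous_on_compose2[OF I.intercept_continuous] continuous_intros)
  then show ?thesis unfolding balance_def[abs_def] by (intro continuous_intros)
qed

(* balance z changes sign on (0,1): very early crossings force a very fast incoming velocity,
   very late ones a very fast outgoing velocity. *)
lemma balance_negative_early:
  assumes z: "z \<in> Quad" shows "\<exists>\<tau>. 0 < \<tau> \<and> \<tau> \<le> 1 / 2 \<and> balance z \<tau> < 0"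
proof -
  have y: "0 < fst z" and x: "0 < snd z" using z by (auto simp: Quad_iff)
  obtain R where R: "0 < R" "\<forall>\<xi>. R \<le> \<bar>\<xi>\<bar> \<longrightarrow> J.K \<xi> < I.K (2 * snd z)"
    using J.intercept_eventually_below by blast
  define \<tau> where "\<tau> = min (1 / 2) (fst z / R)"
  have "\<tau> \<le> 1 / 2" unfolding \<tau>_def by (rule min.cobounded1)
  moreover have "0 < \<tau>" using y R by (simp add: \<tau>_def)
  ultimately have \<tau>: "0 < \<tau>" "\<tau> \<le> 1 / 2" by simp_all
  have "\<tau> * R \<le> fst z" using R unfolding \<tau>_def by (simp add: min_def field_simps)
  then have "R \<le> \<bar>- fst z / \<tau>\<bar>" using \<tau> y by (simp add: field_simps)
  then have "J.K (- fst z / \<tau>) < I.K (2 * snd z)" using R by blast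
  also have "\<dots> \<le> I.K (snd z / (1 - \<tau>))"
    using x \<tau> by (intro I.intercept_antimono_pos) (auto simp: field_simps)
  finally show ?thesis using \<tau> unfolding balance_def by auto
qed

lemma balance_positive_late:
  assumes z: "z \<in> Quad" shows "\<exists>\<tau>. 1 / 2 \<le> \<tau> \<and> \<tau> < 1 \<and> 0 < balance z \<tau>"
proof -
  have y: "0 < fst z" and x: "0 < snd z" using z by (auto simp: Quad_iff)
  obtain R where R: "0 < R" "\<forall>\<xi>. R \<le> \<bar>\<xi>\<bar> \<longrightarrow> I.K \<xi> < J.K (- 2 * fst z)"
    using I.intercept_eventually_below by blast
  define \<sigma> where "\<sigma> = min (1 / 2) (snd z / R)"
  have "\<sigma> \<le> 1 / 2" unfolding \<sigma>_def by (rule min.cobounded1)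
  moreover have "0 < \<sigma>" using x R by (simp add: \<sigma>_def)
  ultimately have \<sigma>: "0 < \<sigma>" "\<sigma> \<le> 1 / 2" by simp_all
  have "\<sigma> * R \<le> snd z" using R unfolding \<sigma>_def by (simp add: min_def field_simps)
  then have "R \<le> \<bar>snd z / (1 - (1 - \<sigma>))\<bar>" using \<sigma> x by (simp add: field_simps)
  then have "I.K (snd z / (1 - (1 - \<sigma>))) < J.K (- 2 * fst z)" using R by blast
  also have "\<dots> \<le> J.K (- fst z / (1 - \<sigma>))"
    using y \<sigma> by (intro J.intercept_mono_neg) (auto simp: field_simps)
  finally show ?thesis using \<sigma> unfolding balance_def by (intro exI[of _ "1 - \<sigma>"]) auto
qed

lemma balance_root:
  assumes z: "z \<in> Quad" shows "\<exists>\<tau>. 0 < \<tau> \<and> \<tau> < 1 \<and> balance z \<tau> = 0"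
proof -
  obtain \<sigma> \<tau> where \<sigma>: "0 < \<sigma>" "\<sigma> \<le> 1 / 2" "balance z \<sigma> < 0"
    and \<tau>: "1 / 2 \<le> \<tau>" "\<tau> < 1" "0 < balance z \<tau>"
    using balance_negative_early[OF z] balance_positive_late[OF z] by blast
  then obtain t where "\<sigma> \<le> t" "t \<le> \<tau>" "balance z t = 0"
    using IVT'[of "balance z" \<sigma> 0 \<tau>] balance_continuous_in_time[of \<sigma> \<tau>] by auto
  with \<sigma> \<tau> show ?thesis by (intro exI[of _ t]) auto
qed

definition opt_time :: "real \<times> real \<Rightarrow> real" where
  "opt_time z = (SOME \<tau>. 0 < \<tau> \<and> \<tau> < 1 \<and> balance z \<tau> = 0)"

lemma opt_time:
  assumes "z \<in> Quad" shows "0 < opt_time z" "opt_time z < 1" "balance z (opt_time z) = 0"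
  using someI_ex[OF balance_root[OF assms]] unfolding opt_time_def by auto

lemma opt_time_continuous: "continuous_on Quad opt_time"
  by (rule continuous_on_root_of_increasing[where G = balance and a = 0 and b = 1, OF open_Quad])
    (use opt_time balance_strict_mono balance_continuous_in_point in auto)

definition vel_in :: "real \<times> real \<Rightarrow> real" where
  "vel_in z = - fst z / opt_time z"

definition vel_out :: "real \<times> real \<Rightarrow> real" where
  "vel_out z = snd z / (1 - opt_time z)"

lemma vel_in_neg: "z \<in> Quad \<Longrightarrow> vel_in z < 0"
  using opt_time[of z] unfolding vel_in_def by (auto simp: Quad_iff)

lemma vel_out_pos: "z \<in> Quad \<Longrightarrow> 0 < vel_out z"
  using opt_time[of z] unfolding vel_out_def by (auto simp: Quad_iff)

lemma intercept_vel: "z \<in> Quad \<Longrightarrow> J.K (vel_in z) = I.K (vel_out z)"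
  using opt_time(3)[of z] unfolding vel_in_def vel_out_def balance_def by simp

lemma vel_in_continuous: "continuous_on Quad vel_in"
  unfolding vel_in_def[abs_def] using opt_time_continuous opt_time(1)
  by (intro continuous_intros) (auto simp: less_le)

lemma vel_out_continuous: "continuous_on Quad vel_out"
  unfolding vel_out_def[abs_def] using opt_time_continuous opt_time(2)
  by (intro continuous_intros) (auto simp: less_le)

definition cost_in :: "real \<Rightarrow> real \<Rightarrow> ereal" where
  "cost_in \<tau> s = (if s = 0 then 0 else if \<tau> = 0 then \<infinity>
     else ereal (\<tau> * gj (- s / \<tau>) - \<tau> * c))"

definition cost_out :: "real \<Rightarrow> real \<Rightarrow> ereal" where
  "cost_out \<tau> s = (if s = 0 then ereal c else if \<tau> = 1 then \<infinity>
     else ereal ((1 - \<tau>) * gi (s / (1 - \<tau>)) + \<tau> * c))"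

definition plane :: "real \<Rightarrow> real \<Rightarrow> real \<times> real \<Rightarrow> real" where
  "plane a b z = J.K a - deriv gj a * fst z + deriv gi b * snd z"

lemma cost_lower_bound:
  assumes z: "z \<in> Quad" and t: "0 \<le> t1" "t1 \<le> t2" "t2 \<le> 1"
    and ab: "J.K a = I.K b" and wait: "t1 = t2 \<or> J.K a \<le> c"
  shows "ereal (plane a b z) \<le> cost_in t1 (fst z) + cost_out t2 (snd z)"
proof -
  have y: "0 < fst z" and x: "0 < snd z" using z by (auto simp: Quad_iff)
  consider "t1 = 0" | "t1 \<noteq> 0" "t2 = 1" | "0 < t1" "t2 < 1" using t by linarith
  then show ?thesis
  proof cases
    case 3
    have "t1 * J.K a + deriv gj a * - fst z \<le> t1 * gj (- fst z / t1)"
      using 3 by (intro J.perspective_below)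
    moreover have "(1 - t2) * I.K b + deriv gi b * snd z \<le> (1 - t2) * gi (snd z / (1 - t2))"
      using 3 by (intro I.perspective_below) simp
    moreover have "0 \<le> (t2 - t1) * (c - J.K a)" using wait t by auto
    ultimately have "plane a b z \<le> (t1 * gj (- fst z / t1) - t1 * c)
        + ((1 - t2) * gi (snd z / (1 - t2)) + t2 * c)"
      using ab unfolding plane_def by (simp add: algebra_simps)
    then show ?thesis using 3 y x by (simp add: cost_in_def cost_out_def)
  qed (use y x in \<open>simp_all add: cost_in_def cost_out_def\<close>)
qed

lemma cost_value:
  assumes z: "z \<in> Quad" and t: "0 < t1" "t1 \<le> t2" "t2 < 1"
    and a: "t1 * a = - fst z" and b: "(1 - t2) * b = snd z"
  shows "cost_in t1 (fst z) + cost_out t2 (snd z)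
    = ereal (t1 * J.K a + (1 - t2) * I.K b + (t2 - t1) * c - deriv gj a * fst z + deriv gi b * snd z)"
proof -
  have y: "0 < fst z" and x: "0 < snd z" using z by (auto simp: Quad_iff)
  have "- fst z / t1 = a" "snd z / (1 - t2) = b" using t a[symmetric] b[symmetric] by auto
  then have "cost_in t1 (fst z) + cost_out t2 (snd z) = ereal (t1 * gj a - t1 * c + ((1 - t2) * gi b + t2 * c))"
    using t y x by (simp add: cost_in_def cost_out_def)
  also have "t1 * gj a = t1 * J.K a + (t1 * a) * deriv gj a"
    by (simp add: tangent_intercept_def algebra_simps)
  also have "(1 - t2) * gi b = (1 - t2) * I.K b + ((1 - t2) * b) * deriv gi b"
    by (simp add: tangent_intercept_def algebra_simps)
  finally show ?thesis unfolding a b by (simp add: algebra_simps)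
qed

(* The implicit cost: crossing the junction without waiting. *)
definition D_imp :: "real \<times> real \<Rightarrow> ereal" where
  "D_imp z = (INF \<tau> \<in> {0..1}. cost_in \<tau> (fst z) + cost_out \<tau> (snd z))"

lemma D_imp_ge:
  assumes "z \<in> Quad" "J.K a = I.K b" shows "ereal (plane a b z) \<le> D_imp z"
  unfolding D_imp_def using assms by (auto intro!: INF_greatest cost_lower_bound)

lemma opt_time_cost:
  assumes z: "z \<in> Quad"
  shows "cost_in (opt_time z) (fst z) + cost_out (opt_time z) (snd z)
    = ereal (plane (vel_in z) (vel_out z) z)"
proof -
  note t = opt_time[OF z]
  have "opt_time z * vel_in z = - fst z" "(1 - opt_time z) * vel_out z = snd z"
    using t by (simp_all add: vel_in_def vel_out_def)
  then have "cost_in (opt_time z) (fst z) + cost_out (opt_time z) (snd z)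
      = ereal (opt_time z * J.K (vel_in z) + (1 - opt_time z) * I.K (vel_out z)
          + (opt_time z - opt_time z) * c - deriv gj (vel_in z) * fst z + deriv gi (vel_out z) * snd z)"
    using t by (intro cost_value[OF z]) auto
  also have "\<dots> = ereal (plane (vel_in z) (vel_out z) z)"
    using intercept_vel[OF z] by (simp add: plane_def algebra_simps)
  finally show ?thesis .
qed

lemma D_imp_eq:
  assumes z: "z \<in> Quad" shows "D_imp z = ereal (plane (vel_in z) (vel_out z) z)"
proof (rule antisym)
  have "D_imp z \<le> cost_in (opt_time z) (fst z) + cost_out (opt_time z) (snd z)"
    unfolding D_imp_def using opt_time[OF z] by (intro INF_lower) auto
  then show "D_imp z \<le> ereal (plane (vel_in z) (vel_out z) z)" by (simp only: opt_time_cost[OF z])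
  show "ereal (plane (vel_in z) (vel_out z) z) \<le> D_imp z"
    by (rule D_imp_ge[OF z intercept_vel[OF z]])
qed

definition xi_in :: real where "xi_in = (THE \<xi>. \<xi> \<le> 0 \<and> J.K \<xi> = c)"
definition xi_out :: real where "xi_out = (THE \<xi>. 0 \<le> \<xi> \<and> I.K \<xi> = c)"

lemma xi_in: "xi_in \<le> 0" "J.K xi_in = c"
  using theI'[OF J.intercept_root_neg[OF c_le_j]] unfolding xi_in_def by auto

lemma xi_out: "0 \<le> xi_out" "I.K xi_out = c"
  using theI'[OF I.intercept_root_pos[OF c_le_i]] unfolding xi_out_def by auto

(* Optimal slopes for the junction cost: if crossing without waiting is too expensive
   (K_j > c at the optimal crossing velocity), one moves at the critical velocities and waits. *)
definition jun_in :: "real \<times> real \<Rightarrow> real" where "jun_in z = min (vel_in z) xi_in"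
definition jun_out :: "real \<times> real \<Rightarrow> real" where "jun_out z = max (vel_out z) xi_out"

lemma jun_no_wait:
  assumes z: "z \<in> Quad" and le: "J.K (vel_in z) \<le> c"
  shows "jun_in z = vel_in z" "jun_out z = vel_out z"
proof -
  have "vel_in z \<le> xi_in"
    using J.intercept_strict_mono_neg[of xi_in "vel_in z"] vel_in_neg[OF z] xi_in le by force
  then show "jun_in z = vel_in z" by (simp add: jun_in_def)
  have "xi_out \<le> vel_out z"
    using I.intercept_strict_antimono_pos[of "vel_out z" xi_out] vel_out_pos[OF z] xi_out le
      intercept_vel[OF z] by force
  then show "jun_out z = vel_out z" by (simp add: jun_out_def)
qed

lemma jun_wait:
  assumes z: "z \<in> Quad" and gt: "c < J.K (vel_in z)"
  shows "xi_in < vel_in z" "vel_out z < xi_out" "jun_in z = xi_in" "jun_out z = xi_out"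
proof -
  show "xi_in < vel_in z"
    using J.intercept_mono_neg[of "vel_in z" xi_in] xi_in gt by force
  then show "jun_in z = xi_in" by (simp add: jun_in_def)
  show "vel_out z < xi_out"
    using I.intercept_antimono_pos[of xi_out "vel_out z"] xi_out gt intercept_vel[OF z] by force
  then show "jun_out z = xi_out" by (simp add: jun_out_def)
qed

lemma intercept_jun:
  assumes z: "z \<in> Quad" shows "J.K (jun_in z) = I.K (jun_out z)" "J.K (jun_in z) \<le> c"
  using jun_no_wait[OF z] jun_wait[OF z] intercept_vel[OF z] xi_in xi_out
  by (cases "J.K (vel_in z) \<le> c"; simp)+

(* The junction cost: one may wait at the junction between t1 and t2. *)
definition schedules :: "(real \<times> real) set" where
  "schedules = {(t1, t2). 0 \<le> t1 \<and> t1 \<le> t2 \<and> t2 \<le> 1}"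

definition D_jun :: "real \<times> real \<Rightarrow> ereal" where
  "D_jun z = (INF t \<in> schedules. cost_in (fst t) (fst z) + cost_out (snd t) (snd z))"

lemma D_jun_ge:
  assumes "z \<in> Quad" "J.K a = I.K b" "J.K a \<le> c" shows "ereal (plane a b z) \<le> D_jun z"
  unfolding D_jun_def schedules_def using assms by (auto intro!: INF_greatest cost_lower_bound)

(* When waiting pays off, arriving at velocity xi^- and leaving at velocity xi^+ is an
   admissible schedule attaining the plane of the critical velocities. *)
lemma waiting_schedule:
  assumes z: "z \<in> Quad" and gt: "c < J.K (vel_in z)"
  defines "t1 \<equiv> fst z / (- xi_in)" and "t2 \<equiv> 1 - snd z / xi_out"
  shows "(t1, t2) \<in> schedules"
    and "cost_in t1 (fst z) + cost_out t2 (snd z) = ereal (plane xi_in xi_out z)"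
proof -
  note w = jun_wait[OF z gt] and t = opt_time[OF z]
  have y: "0 < fst z" and x: "0 < snd z" using z by (auto simp: Quad_iff)
  have xi_in_neg: "xi_in < 0" and xi_out_pos: "0 < xi_out"
    using w vel_in_neg[OF z] vel_out_pos[OF z] by linarith+
  have "t1 \<le> fst z / (- vel_in z)"
    unfolding t1_def using w y vel_in_neg[OF z] by (intro divide_left_mono) (auto intro: mult_neg_neg)
  also have "\<dots> = opt_time z" using y t by (simp add: vel_in_def)
  finally have t1_le: "t1 \<le> opt_time z" .
  have "1 - opt_time z = snd z / vel_out z" using x t by (simp add: vel_out_def)
  also have "\<dots> \<ge> snd z / xi_out"
    using w x vel_out_pos[OF z] by (intro divide_left_mono) (auto intro: mult_pos_pos)
  finally have le_t2: "opt_time z \<le> t2" unfolding t2_def by simp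
  have t1_pos: "0 < t1" and t2_lt: "t2 < 1"
    unfolding t1_def t2_def using y x xi_in_neg xi_out_pos by (simp_all add: divide_pos_neg)
  show "(t1, t2) \<in> schedules"
    using t1_pos t1_le le_t2 t2_lt t unfolding schedules_def by simp
  have "t1 * xi_in = - fst z" "(1 - t2) * xi_out = snd z"
    unfolding t1_def t2_def using xi_in_neg xi_out_pos by simp_all
  then have "cost_in t1 (fst z) + cost_out t2 (snd z)
      = ereal (t1 * J.K xi_in + (1 - t2) * I.K xi_out + (t2 - t1) * c
          - deriv gj xi_in * fst z + deriv gi xi_out * snd z)"
    using t1_pos t1_le le_t2 t2_lt by (intro cost_value[OF z]) auto
  also have "\<dots> = ereal (plane xi_in xi_out z)"
    using xi_in xi_out by (simp add: plane_def algebra_simps)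
  finally show "cost_in t1 (fst z) + cost_out t2 (snd z) = ereal (plane xi_in xi_out z)" .
qed

lemma D_jun_eq:
  assumes z: "z \<in> Quad" shows "D_jun z = ereal (plane (jun_in z) (jun_out z) z)"
proof (rule antisym)
  show "ereal (plane (jun_in z) (jun_out z) z) \<le> D_jun z"
    using intercept_jun[OF z] by (intro D_jun_ge[OF z])
  obtain t where t: "t \<in> schedules"
    and attained: "cost_in (fst t) (fst z) + cost_out (snd t) (snd z) = ereal (plane (jun_in z) (jun_out z) z)"
  proof (cases "J.K (vel_in z) \<le> c")
    case True
    have "(opt_time z, opt_time z) \<in> schedules"
      using opt_time[OF z] unfolding schedules_def by simp
    then show ?thesis using that opt_time_cost[OF z] jun_no_wait[OF z True] by simp
  next
    case False
    then show ?thesis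
      using that waiting_schedule[OF z] jun_wait[OF z] by fastforce
  qed
  have "D_jun z \<le> cost_in (fst t) (fst z) + cost_out (snd t) (snd z)"
    unfolding D_jun_def using t by (rule INF_lower)
  then show "D_jun z \<le> ereal (plane (jun_in z) (jun_out z) z)" by (simp only: attained)
qed

(* Envelope principle: an upper envelope of balanced supporting planes that touches at every
   point along continuous slopes is convex, C^1 with gradient (-g_j'(A), g_i'(B)), and solves
   both Hamilton-Jacobi equations because H(g'(a)) = -K(a). *)
lemma C1_HJ_envelope:
  fixes f :: "real \<times> real \<Rightarrow> real"
  assumes cont: "continuous_on Quad A" "continuous_on Quad B"
    and balanced: "\<And>z. z \<in> Quad \<Longrightarrow> J.K (A z) = I.K (B z)"
    and touch: "\<And>z. z \<in> Quad \<Longrightarrow> f z = plane (A z) (B z) z"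
    and above: "\<And>u v. u \<in> Quad \<Longrightarrow> v \<in> Quad \<Longrightarrow> plane (A u) (B u) v \<le> f v"
  shows "C1_HJ (Ham (\<lambda>_. gj) 0) (Ham (\<lambda>_. gi) 0) f"
proof -
  define Dy where "Dy z = - deriv gj (A z)" for z
  define Dx where "Dx z = deriv gi (B z)" for z
  have cont_Dy: "continuous_on Quad Dy" unfolding Dy_def
    by (intro continuous_intros continuous_on_compose2[OF _ cont(1), of UNIV]
        continuous_at_imp_continuous_on ballI DERIV_isCont[OF J.has_second_deriv]) auto
  have cont_Dx: "continuous_on Quad Dx" unfolding Dx_def
    by (intro continuous_on_compose2[OF _ cont(2), of UNIV]
        continuous_at_imp_continuous_on ballI DERIV_isCont[OF I.has_second_deriv]) auto
  have sub: "f u + (Dy u, Dx u) \<bullet> (v - u) \<le> f v" if "u \<in> Quad" "v \<in> Quad" for u v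
  proof -
    have "(Dy u, Dx u) \<bullet> (v - u) = Dy u * (fst v - fst u) + Dx u * (snd v - snd u)"
      by (cases u, cases v) simp
    then have "f u + (Dy u, Dx u) \<bullet> (v - u) = plane (A u) (B u) v"
      using touch[OF that(1)] by (simp add: Dy_def Dx_def plane_def algebra_simps)
    then show ?thesis using above[OF that] by simp
  qed
  have cont_grad: "continuous_on Quad (\<lambda>z. (Dy z, Dx z))"
    using cont_Dy cont_Dx by (rule continuous_on_Pair)
  have "(f has_derivative (\<lambda>(h, k). Dy z * h + Dx z * k)) (at z)" if "z \<in> Quad" for z
  proof -
    have "(\<lambda>w. (Dy z, Dx z) \<bullet> w) = (\<lambda>(h, k). Dy z * h + Dx z * k)" by auto
    with has_derivative_continuous_subgradient[OF open_Quad that cont_grad sub] show ?thesis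
      by simp
  qed
  moreover have "convex_on Quad f"
    using convex_Quad sub by (rule convex_on_subgradient)
  moreover have "f z - snd z * Dx z - fst z * Dy z + Ham (\<lambda>_. gi) 0 (Dx z) = 0"
    and "f z - snd z * Dx z - fst z * Dy z + Ham (\<lambda>_. gj) 0 (- Dy z) = 0" if "z \<in> Quad" for z
    using touch[OF that] balanced[OF that] I.Ham_deriv J.Ham_deriv
    by (simp_all add: Dy_def Dx_def plane_def)
  ultimately show ?thesis
    unfolding C1_HJ_def using cont_Dy cont_Dx by blast
qed

theorem C1_HJ_D_imp: "C1_HJ (Ham (\<lambda>_. gj) 0) (Ham (\<lambda>_. gi) 0) (\<lambda>z. real_of_ereal (D_imp z))"
  using vel_in_continuous vel_out_continuous intercept_vel
proof (rule C1_HJ_envelope)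
  show "real_of_ereal (D_imp z) = plane (vel_in z) (vel_out z) z" if "z \<in> Quad" for z
    using D_imp_eq[OF that] by simp
  show "plane (vel_in u) (vel_out u) v \<le> real_of_ereal (D_imp v)" if "u \<in> Quad" "v \<in> Quad" for u v
    using D_imp_ge[OF that(2) intercept_vel[OF that(1)]] D_imp_eq[OF that(2)] by simp
qed

lemma jun_in_continuous: "continuous_on Quad jun_in"
  unfolding jun_in_def[abs_def] using vel_in_continuous by (intro continuous_intros)

lemma jun_out_continuous: "continuous_on Quad jun_out"
  unfolding jun_out_def[abs_def] using vel_out_continuous by (intro continuous_intros)

theorem C1_HJ_D_jun: "C1_HJ (Ham (\<lambda>_. gj) 0) (Ham (\<lambda>_. gi) 0) (\<lambda>z. real_of_ereal (D_jun z))"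
  using jun_in_continuous jun_out_continuous intercept_jun(1)
proof (rule C1_HJ_envelope)
  show "real_of_ereal (D_jun z) = plane (jun_in z) (jun_out z) z" if "z \<in> Quad" for z
    using D_jun_eq[OF that] by simp
  show "plane (jun_in u) (jun_out u) v \<le> real_of_ereal (D_jun v)" if "u \<in> Quad" "v \<in> Quad" for u v
    using D_jun_ge[OF that(2) intercept_jun[OF that(1)]] D_jun_eq[OF that(2)] by simp
qed

definition D_lin :: "real \<times> real \<Rightarrow> real" where
  "D_lin z = - deriv gj xi_in * fst z + deriv gi xi_out * snd z + c"

theorem C1_HJ_D_lin: "C1_HJ (Ham (\<lambda>_. gj) 0) (Ham (\<lambda>_. gi) 0) D_lin"
proof (rule C1_HJ_envelope[where A = "\<lambda>_. xi_in" and B = "\<lambda>_. xi_out"])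
  show "J.K xi_in = I.K xi_out" using xi_in xi_out by simp
  show "D_lin z = plane xi_in xi_out z" "plane xi_in xi_out v \<le> D_lin v" for z v
    using xi_in by (simp_all add: D_lin_def plane_def)
qed (rule continuous_on_const)+

end

theorem mainTheorem18:
  fixes N :: nat and L :: "nat \<Rightarrow> real \<Rightarrow> real" and \<gamma> :: real and i j :: nat
  assumes "N \<ge> 1"
    and "\<gamma> > 0"
    and C2: "\<forall>l\<in>{1..N}. (\<forall>x. L l differentiable at x) \<and> (\<forall>x. deriv (L l) differentiable at x)
              \<and> continuous_on UNIV (deriv (deriv (L l)))"
    and convex: "\<forall>l\<in>{1..N}. \<forall>x. deriv (deriv (L l)) x \<ge> \<gamma>"
    and "i \<in> {1..N}" and "j \<in> {1..N}"
  shows "(\<forall>z\<in>Quad. \<bar>D_junction N L j i z\<bar> \<noteq> \<infinity> \<and> \<bar>D_implicit N L j i z\<bar> \<noteq> \<infinity>)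
       \<and> C1_HJ (Ham L j) (Ham L i) (\<lambda>z. real_of_ereal (D_junction N L j i z))
       \<and> C1_HJ (Ham L j) (Ham L i) (D_linear N L j i)
       \<and> C1_HJ (Ham L j) (Ham L i) (\<lambda>z. real_of_ereal (D_implicit N L j i z))"
proof -
  have "uniformly_convex (L l) \<gamma>" if "l \<in> {1..N}" for l
    using C2 convex that assms(2) by (intro uniformly_convex.intro) auto
  moreover have "L00 N L \<le> L l 0" if "l \<in> {1..N}" for l
    unfolding L00_def using that by (intro Min_le) auto
  ultimately interpret P: junction_pair "L j" "L i" \<gamma> "L00 N L"
    using assms(5,6) by (intro junction_pair.intro junction_pair_axioms.intro) auto
  have "E1 N L j = P.cost_in" "E2 N L i = P.cost_out"
    by (simp_all add: fun_eq_iff E1_def E2_def P.cost_in_def P.cost_out_def)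
  then have D: "D_junction N L j i = P.D_jun" "D_implicit N L j i = P.D_imp"
    by (simp_all add: fun_eq_iff D_junction_def P.D_jun_def P.schedules_def D_implicit_def P.D_imp_def)
  have "D_linear N L j i = P.D_lin"
    by (simp add: fun_eq_iff D_linear_def P.D_lin_def xi_minus_def xi_plus_def P.xi_in_def
        P.xi_out_def Kfun_def tangent_intercept_def)
  moreover have "Ham L l = Ham (\<lambda>_. L l) 0" for l
    by (simp add: fun_eq_iff Ham_def)
  ultimately show ?thesis
    using P.C1_HJ_D_jun P.C1_HJ_D_lin P.C1_HJ_D_imp P.D_jun_eq P.D_imp_eq by (simp add: D)
qed

end
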